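(* Let $(\mathbb{K},|\cdot|)$ be an algebraically closed normed field, $f\in\mathbb{K}[z]$ a polynomial of degree $n\ge2$, $\xi\in\mathbb{K}^n$ a root-vector of $f$, $N\ge1$ and $1\le p\le\infty$. Suppose $x^{(0)}\in\mathbb{K}^n$ has pairwise distinct components and \[ \Psi(E(x^{(0)}))\le 2 . \] Then $f$ has only simple zeros, and the $N$th Weierstrass-type iteration $x^{(k+1)}=T^{(N)}(x^{(k)})$ is well-defined and converges to $\xi$ with error estimates \[ \|x^{(k+1)}-\xi\|\preceq\theta\,\lambda^{(N+1)^k}\|x^{(k)}-\xi\|,\qquad \|x^{(k)}-\xi\|\preceq\theta^k\lambda^{((N+1)^k-1)/N}\|x^{(0)}-\xi\| \] for all $k\ge0$, where $\lambda=\phi_N(E(x^{(0)}))$ and $\theta=\psi_N(E(x^{(0)}))$. Moreover, if $\Psi(E(x^{(0)}))<2$, then the iteration converges to $\xi$ with order of convergence $N+1$.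
   Context: $a_0$ is the leading coefficient of $f$. For $1\le p\le\infty$, $\|x\|_p=(\sum_i|x_i|^p)^{1/p}$ (max-norm if $p=\infty$). For $x\in\mathbb{K}^n$, $\|x\|=(|x_1|,\dots,|x_n|)\in\mathbb{R}^n$ and $\preceq$ is the coordinatewise order on $\mathbb{R}^n$. $d(x)=(d_1(x),\dots,d_n(x))$, $d_i(x)=\min_{j\ne i}|x_i-x_j|$; for $x\in\mathbb{K}^n$, $y\in\mathbb{R}^n$ with nonzero components, $x/y=(|x_1|/y_1,\dots,|x_n|/y_n)$. A root-vector of $f$ is $\xi\in\mathbb{K}^n$ with $f(z)=a_0\prod_{i}(z-\xi_i)$ for all $z$. $E(x)=\|(x-\xi)/d(x)\|_p$. Weierstrass-type maps: $T^{(0)}(x)=x$ on $D_0=\mathbb{K}^n$; $D_{N+1}=\{x\in D_N: x_i\ne T^{(N)}_j(x)\ \forall i\ne j\}$, and for $x\in D_{N+1}$, $T^{(N+1)}_i(x)=x_i-\dfrac{f(x_i)}{a_0\prod_{j\ne i}(x_i-T^{(N)}_j(x))}$. The iteration is well-defined if $x^{(k)}\in D_N$ for all $k$. Real functions: $\omega(t)=\left(1+\frac{t}{(n-1)^{1/p}}\right)^{n-1}$ (with $(n-1)^{1/p}=1$ if $p=\infty$), $\Psi(t)=(1+2t)\omega(t)$ for $t\ge0$; $R$ is the unique positive solution of $\Psi(t)=2$. On $[0,R]$: $\phi_0\equiv1$, and recursively $\omega_N(t)=\left(1+\frac{t\phi_N(t)}{(n-1)^{1/p}}\right)^{n-1}$,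 $\phi_{N+1}(t)=\dfrac{\omega_N(t)-1}{1-2t\omega_N(t)}$ (well-defined, nondecreasing, with values in $[0,1]$); for $N\ge1$, $\psi_N(t)=1-2t\,\omega_{N-1}(t)$. *)

theory Defs
  imports "HOL-Analysis.Analysis" "HOL-Computational_Algebra.Polynomial"
begin

definition is_abs_value :: "('a::field \<Rightarrow> real) \<Rightarrow> bool" where
  "is_abs_value av \<longleftrightarrow>
     (\<forall>x. av x \<ge> 0) \<and> (\<forall>x. av x = 0 \<longleftrightarrow> x = 0) \<and>
     (\<forall>x y. av (x * y) = av x * av y) \<and> (\<forall>x y. av (x + y) \<le> av x + av y)"

(* Vectors in K^n are functions nat => K, only indices i < n matter. *)

definition pnorm :: "ereal \<Rightarrow> nat \<Rightarrow> (nat \<Rightarrow> real) \<Rightarrow> real" where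
  "pnorm p n v = (if p = \<infinity> then Max ({\<bar>v i\<bar> | i. i < n} \<union> {0})
                 else (\<Sum>i<n. \<bar>v i\<bar> powr real_of_ereal p) powr (1 / real_of_ereal p))"

definition rootp :: "ereal \<Rightarrow> nat \<Rightarrow> real" where
  "rootp p n = (if p = \<infinity> then 1 else real (n - 1) powr (1 / real_of_ereal p))"

definition root_vector :: "'a::field poly \<Rightarrow> nat \<Rightarrow> (nat \<Rightarrow> 'a) \<Rightarrow> bool" where
  "root_vector f n \<xi> \<longleftrightarrow> (\<forall>z. poly f z = lead_coeff f * (\<Prod>i<n. z - \<xi> i))"

definition dvec :: "('a::ab_group_add \<Rightarrow> real) \<Rightarrow> nat \<Rightarrow> (nat \<Rightarrow> 'a) \<Rightarrow> nat \<Rightarrow> real" where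
  "dvec av n x i = Min {av (x i - x j) | j. j < n \<and> j \<noteq> i}"

definition Efun :: "('a::field \<Rightarrow> real) \<Rightarrow> ereal \<Rightarrow> nat \<Rightarrow> (nat \<Rightarrow> 'a) \<Rightarrow> (nat \<Rightarrow> 'a) \<Rightarrow> real" where
  "Efun av p n \<xi> x = pnorm p n (\<lambda>i. av (x i - \<xi> i) / dvec av n x i)"

definition omega :: "ereal \<Rightarrow> nat \<Rightarrow> real \<Rightarrow> real" where
  "omega p n t = (1 + t / rootp p n) ^ (n - 1)"

definition Psi :: "ereal \<Rightarrow> nat \<Rightarrow> real \<Rightarrow> real" where
  "Psi p n t = (1 + 2 * t) * omega p n t"

fun phiN :: "ereal \<Rightarrow> nat \<Rightarrow> nat \<Rightarrow> real \<Rightarrow> real" where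
  "phiN p n 0 t = 1"
| "phiN p n (Suc N) t =
     (let w = (1 + t * phiN p n N t / rootp p n) ^ (n - 1) in (w - 1) / (1 - 2 * t * w))"

definition omegaN :: "ereal \<Rightarrow> nat \<Rightarrow> nat \<Rightarrow> real \<Rightarrow> real" where
  "omegaN p n N t = (1 + t * phiN p n N t / rootp p n) ^ (n - 1)"

definition psiN :: "ereal \<Rightarrow> nat \<Rightarrow> nat \<Rightarrow> real \<Rightarrow> real" where
  "psiN p n N t = 1 - 2 * t * omegaN p n (N - 1) t"

fun TW :: "'a::field poly \<Rightarrow> nat \<Rightarrow> nat \<Rightarrow> (nat \<Rightarrow> 'a) \<Rightarrow> (nat \<Rightarrow> 'a)" where
  "TW f n 0 x = x"
| "TW f n (Suc N) x =
     (\<lambda>i. x i - poly f (x i) / (lead_coeff f * (\<Prod>j\<in>{..<n} - {i}. x i - TW f n N x j)))"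

fun DW :: "'a::field poly \<Rightarrow> nat \<Rightarrow> nat \<Rightarrow> (nat \<Rightarrow> 'a) set" where
  "DW f n 0 = UNIV"
| "DW f n (Suc N) = {x \<in> DW f n N. \<forall>i<n. \<forall>j<n. i \<noteq> j \<longrightarrow> x i \<noteq> TW f n N x j}"

definition conv_av :: "('a \<Rightarrow> real) \<Rightarrow> nat \<Rightarrow> (nat \<Rightarrow> nat \<Rightarrow> 'a::ab_group_add) \<Rightarrow> (nat \<Rightarrow> 'a) \<Rightarrow> bool" where
  "conv_av av n xs \<xi> \<longleftrightarrow> (\<forall>i<n. \<forall>e>0. \<exists>K. \<forall>k\<ge>K. av (xs k i - \<xi> i) < e)"

definition errmax :: "('a \<Rightarrow> real) \<Rightarrow> nat \<Rightarrow> (nat \<Rightarrow> 'a::ab_group_add) \<Rightarrow> (nat \<Rightarrow> 'a) \<Rightarrow> real" where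
  "errmax av n x \<xi> = Max ({av (x i - \<xi> i) | i. i < n} \<union> {0})"

definition conv_order :: "('a \<Rightarrow> real) \<Rightarrow> nat \<Rightarrow> (nat \<Rightarrow> nat \<Rightarrow> 'a::ab_group_add) \<Rightarrow> (nat \<Rightarrow> 'a) \<Rightarrow> nat \<Rightarrow> bool" where
  "conv_order av n xs \<xi> r \<longleftrightarrow> conv_av av n xs \<xi> \<and>
     (\<exists>C\<ge>0. \<forall>k. errmax av n (xs (Suc k)) \<xi> \<le> C * errmax av n (xs k) \<xi> ^ r)"

end

theory Submission
  imports Defs
begin

text \<open>
  Write \<open>t = E(x)\<close> and \<open>y = T^(M)(x)\<close>. Since \<open>f(z) = a_0 \<Prod>(z - \<xi>_j)\<close>,
  \<open>T^(M+1)(x)_i - \<xi>_i = (x_i - \<xi>_i) (1 - \<Prod>_{j \<noteq> i} (x_i - \<xi>_j) / (x_i - y_j))\<close>.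
  If \<open>|y_j - \<xi>_j| \<le> \<phi>_M(t) E_j(x) |x_i - y_j|\<close>, each factor of the product differs from 1
  by at most \<open>\<phi>_M(t) E_j(x)\<close>, and AM-GM with the power-mean inequality bound the correction
  factor by \<open>\<omega>_M(t) - 1\<close>. The triangle inequality turns this error bound back into the
  hypothesis for \<open>M + 1\<close>, with \<open>\<phi>_{M+1}(t) = (\<omega>_M(t) - 1) / (1 - 2t \<omega>_M(t))\<close>.
  So one step of \<open>T^(N)\<close> multiplies each error by \<open>\<omega>_{N-1}(t) - 1 = \<phi>_N(t) \<psi>_N(t)\<close>,
  shrinks each separation \<open>d_i\<close> by at most the factor \<open>\<psi>_N(t)\<close>, and maps \<open>t\<close> to at most
  \<open>\<phi>_N(t) t\<close>. As \<open>\<phi>_N(\<mu> t) \<le> \<mu>^N \<phi>_N(t)\<close> for \<open>\<mu> \<le> 1\<close>, induction gives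
  \<open>E(x^(k)) \<le> \<lambda>^(((N+1)^k - 1)/N) E(x^(0))\<close> and with it the error estimates.
  If \<open>\<Psi>(E(x^(0))) < 2\<close> then \<open>\<lambda> < 1\<close>, so the separations stay bounded away from 0,
  \<open>E(x^(k))\<close> is bounded by a multiple of the maximal error, and the estimates turn into
  convergence of order \<open>N + 1\<close>.
\<close>

section \<open>Absolute values\<close>

locale abs_value =
  fixes av :: "'a::field \<Rightarrow> real"
  assumes is_abs_value: "is_abs_value av"
begin

lemma av_nonneg: "0 \<le> av x"
  and av_eq_0_iff [simp]: "av x = 0 \<longleftrightarrow> x = 0"
  and av_mult: "av (x * y) = av x * av y"
  and av_triangle: "av (x + y) \<le> av x + av y"
  using is_abs_value unfolding is_abs_value_def by auto

lemma av_0 [simp]: "av 0 = 0"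
  by simp

lemma av_pos: "x \<noteq> 0 \<Longrightarrow> 0 < av x"
  using av_nonneg[of x] av_eq_0_iff[of x] by linarith

lemma av_one [simp]: "av 1 = 1"
  using av_mult[of 1 1] by simp

lemma av_uminus [simp]: "av (- x) = av x"
proof -
  have "av (-1) ^ 2 = 1"
    using av_mult[of "-1" "-1"] by (simp add: power2_eq_square)
  then have "av (-1) = 1"
    using av_nonneg[of "-1"] power2_eq_1_iff[of "av (-1)"] by linarith
  then show ?thesis
    using av_mult[of "-1" x] by simp
qed

lemma av_minus_commute: "av (x - y) = av (y - x)"
  using av_uminus[of "x - y"] by simp

lemma av_divide: "av (x / y) = av x / av y"
proof (cases "y = 0")
  case False
  then have "av (x / y) * av y = av x"
    using av_mult[of "x / y" y] by simp
  then show ?thesis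
    using av_pos[OF False] by (simp add: eq_divide_eq)
qed simp

lemma av_triangle_diff: "av (x - z) \<le> av (x - y) + av (y - z)"
  using av_triangle[of "x - y" "y - z"] by simp

lemma av_reverse_triangle: "av x - av y \<le> av (x - y)"
  using av_triangle[of "x - y" y] by simp

lemma av_one_minus_prod_le:
  assumes "finite S" "\<And>j. j \<in> S \<Longrightarrow> av (z j - 1) \<le> r j"
  shows "av (1 - prod z S) \<le> (\<Prod>j\<in>S. 1 + r j) - 1"
  using assms
proof (induction S rule: finite_induct)
  case (insert a S)
  let ?P = "prod z S" and ?R = "\<Prod>j\<in>S. 1 + r j"
  have IH: "av (1 - ?P) \<le> ?R - 1" and ra: "av (z a - 1) \<le> r a"
    using insert by auto
  have "av ?P \<le> av 1 + av (?P - 1)"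
    using av_triangle[of 1 "?P - 1"] by simp
  then have P_le: "av ?P \<le> ?R"
    using IH by (simp add: av_minus_commute)
  have "1 - z a * ?P = (1 - ?P) + ?P * (1 - z a)"
    by (simp add: algebra_simps)
  then have "av (1 - z a * ?P) \<le> av (1 - ?P) + av ?P * av (z a - 1)"
    by (metis av_triangle av_mult av_minus_commute)
  also have "\<dots> \<le> (?R - 1) + ?R * r a"
    using IH P_le ra av_nonneg[of ?P] av_nonneg[of "z a - 1"] by (intro add_mono mult_mono) auto
  finally show ?case
    using insert by (simp add: algebra_simps)
qed simp

end

section \<open>Real inequalities\<close>

lemma power_minus_one_le_scaled:
  fixes a b l :: real
  assumes "0 \<le> a" "a \<le> l * b" "0 \<le> b" "0 \<le> l" "l \<le> 1"
  shows "(1 + a) ^ m - 1 \<le> l * ((1 + b) ^ m - 1)"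
proof -
  have "(1 + l * b) ^ m - 1 \<le> l * ((1 + b) ^ m - 1)"
  proof (induction m)
    case (Suc m)
    have "(1 + l * b) ^ Suc m \<le> (1 + l * b) * (1 + l * ((1 + b) ^ m - 1))"
      using Suc assms by (simp add: mult_left_mono)
    also have "\<dots> \<le> 1 + l * ((1 + b) ^ Suc m - 1)"
    proof -
      have "0 \<le> l * b * ((1 + b) ^ m - 1) * (1 - l)"
        using assms by simp
      then show ?thesis by (simp add: algebra_simps)
    qed
    finally show ?case by simp
  qed simp
  moreover have "(1 + a) ^ m \<le> (1 + l * b) ^ m"
    using assms by (intro power_mono) auto
  ultimately show ?thesis by simp
qed

lemma powr_le_one_minus_mult:
  fixes c s :: real
  assumes c: "0 \<le> c" "c < 1" and s: "0 \<le> s" "s \<le> 1"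
  shows "(1 - c) powr s \<le> 1 - c * s"
proof -
  have "exp ((1 - s) *\<^sub>R 0 + s *\<^sub>R ln (1 - c)) \<le> (1 - s) * exp 0 + s * exp (ln (1 - c))"
    using s by (intro convex_onD[OF exp_convex]) auto
  then show ?thesis
    using c by (simp add: powr_def algebra_simps)
qed

lemma geometric_exponent: "N * (\<Sum>m<k. (N + 1) ^ m) + 1 = (N + 1 :: nat) ^ k"
  by (induction k) (auto simp: algebra_simps)

section \<open>The functions \<open>\<omega>\<^sub>N\<close> and \<open>\<phi>\<^sub>N\<close>\<close>

lemma rootp_pos: "n \<ge> 2 \<Longrightarrow> 0 < rootp p n"
  by (auto simp: rootp_def)

lemma phiN_Suc_eq: "phiN p n (Suc M) t = (omegaN p n M t - 1) / (1 - 2 * t * omegaN p n M t)"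
  by (simp add: omegaN_def Let_def)

declare phiN.simps(2) [simp del]

lemma omega_eq_omegaN_0: "omega p n t = omegaN p n 0 t"
  by (simp add: omega_def omegaN_def)

context
  fixes p :: ereal and n :: nat
  assumes n_ge_2: "n \<ge> 2"
begin

lemma omega_gt_1: "0 < t \<Longrightarrow> 1 < omega p n t"
  unfolding omega_def using n_ge_2 rootp_pos[OF n_ge_2, of p] by (intro one_less_power) auto

lemma omega_mono: "0 \<le> s \<Longrightarrow> s \<le> t \<Longrightarrow> omega p n s \<le> omega p n t"
  unfolding omega_def using rootp_pos[OF n_ge_2, of p] by (intro power_mono) (auto simp: divide_right_mono)

lemma Psi_mono: "0 \<le> s \<Longrightarrow> s \<le> t \<Longrightarrow> Psi p n s \<le> Psi p n t"
  unfolding Psi_def using omega_mono[of s t] rootp_pos[OF n_ge_2, of p]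
  by (intro mult_mono) (auto simp: omega_def)

lemma two_mult_omega_less_1:
  assumes "0 \<le> t" "Psi p n t \<le> 2"
  shows "2 * t * omega p n t < 1"
proof (cases "t = 0")
  case False
  then show ?thesis
    using assms omega_gt_1[of t] unfolding Psi_def by (simp add: algebra_simps)
qed simp

lemma phiN_omegaN_bounds:
  assumes t: "0 \<le> t" and Psi: "Psi p n t \<le> 2"
  shows "0 \<le> phiN p n M t \<and> phiN p n M t \<le> 1 \<and> 1 \<le> omegaN p n M t
     \<and> omegaN p n M t \<le> omega p n t \<and> 2 * t * omegaN p n M t < 1"
proof (induction M)
  case 0
  then show ?case
    using two_mult_omega_less_1[OF t Psi] t rootp_pos[OF n_ge_2, of p]
    by (simp add: omega_eq_omegaN_0 omegaN_def)
next
  case (Suc M)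
  let ?W = "omegaN p n M t" and ?w = "omega p n t" and ?c = "rootp p n"
  have W: "1 \<le> ?W" "?W \<le> ?w" "2 * t * ?W < 1"
    using Suc by auto
  have "?w - 1 \<le> 1 - 2 * t * ?w"
    using Psi unfolding Psi_def by (simp add: algebra_simps)
  moreover have "2 * t * ?W \<le> 2 * t * ?w"
    using W t by (simp add: mult_left_mono)
  ultimately have phi: "0 \<le> phiN p n (Suc M) t" "phiN p n (Suc M) t \<le> 1"
    using W by (simp_all add: phiN_Suc_eq divide_le_eq_1)
  have "1 + t * phiN p n (Suc M) t / ?c \<le> 1 + t / ?c"
    using rootp_pos[OF n_ge_2, of p] t phi by (simp add: divide_right_mono mult_left_le)
  then have W': "1 \<le> omegaN p n (Suc M) t" "omegaN p n (Suc M) t \<le> ?w"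
    unfolding omegaN_def omega_def using rootp_pos[OF n_ge_2, of p] t phi by (auto intro: power_mono)
  have "2 * t * omegaN p n (Suc M) t < 1"
    using two_mult_omega_less_1[OF t Psi] mult_left_mono[OF W'(2), of "2 * t"] t by simp
  then show ?case
    using phi W' by simp
qed

lemma phiN_Suc_scaled:
  assumes s: "0 \<le> s" "s \<le> t" and Psi: "Psi p n t \<le> 2" and \<nu>: "0 \<le> \<nu>" "\<nu> \<le> 1"
    and le: "omegaN p n M s - 1 \<le> \<nu> * (omegaN p n M t - 1)"
  shows "phiN p n (Suc M) s \<le> \<nu> * phiN p n (Suc M) t"
proof -
  let ?Ws = "omegaN p n M s" and ?Wt = "omegaN p n M t"
  have Wt: "1 \<le> ?Wt" "2 * t * ?Wt < 1"
    using phiN_omegaN_bounds[OF _ Psi, of M] s by auto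
  have Ws: "1 \<le> ?Ws"
    using phiN_omegaN_bounds[OF s(1) order.trans[OF Psi_mono[OF s] Psi], of M] by auto
  have "\<nu> * (?Wt - 1) \<le> ?Wt - 1"
    using \<nu> Wt by (simp add: mult_left_le_one_le)
  then have "2 * s * ?Ws \<le> 2 * t * ?Wt"
    using le s Ws by (intro mult_mono) auto
  then have "(?Ws - 1) / (1 - 2 * s * ?Ws) \<le> (\<nu> * (?Wt - 1)) / (1 - 2 * t * ?Wt)"
    using le Ws Wt by (intro frac_le) auto
  then show ?thesis
    by (simp add: phiN_Suc_eq)
qed

lemma omegaN_scaled:
  assumes s: "0 \<le> s" "s \<le> \<mu> * t" and t: "0 \<le> t" and \<mu>: "0 \<le> \<mu>" "\<mu> \<le> 1" and \<nu>: "0 \<le> \<nu>" "\<nu> \<le> 1"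
    and phi: "0 \<le> phiN p n M s" "0 \<le> phiN p n M t" "phiN p n M s \<le> \<nu> * phiN p n M t"
  shows "omegaN p n M s - 1 \<le> \<mu> * \<nu> * (omegaN p n M t - 1)"
proof -
  let ?c = "rootp p n"
  have "s * phiN p n M s \<le> (\<mu> * t) * (\<nu> * phiN p n M t)"
    using s phi by (intro mult_mono) auto
  then have "s * phiN p n M s / ?c \<le> \<mu> * \<nu> * (t * phiN p n M t / ?c)"
    using rootp_pos[OF n_ge_2, of p] by (simp add: divide_right_mono mult_ac)
  then show ?thesis
    unfolding omegaN_def using s t phi \<mu> \<nu> rootp_pos[OF n_ge_2, of p]
    by (intro power_minus_one_le_scaled) (auto simp: mult_le_one)
qed

text \<open>This quasi-homogeneity of the recursion is where the order \<open>N + 1\<close> comes from.\<close>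

lemma omegaN_minus_one_scaled:
  assumes s: "0 \<le> s" "s \<le> \<mu> * t" and t: "0 \<le> t" and \<mu>: "0 \<le> \<mu>" "\<mu> \<le> 1" and Psi: "Psi p n t \<le> 2"
  shows "omegaN p n M s - 1 \<le> \<mu> ^ Suc M * (omegaN p n M t - 1)"
proof (induction M)
  case 0
  then show ?case
    using omegaN_scaled[OF s t \<mu>, of 1 0] by simp
next
  case (Suc M)
  have st: "s \<le> t"
    using s t \<mu> mult_left_le_one_le[of t \<mu>] by linarith
  have Psi_s: "Psi p n s \<le> 2"
    using Psi_mono[OF s(1) st] Psi by linarith
  have \<mu>M: "0 \<le> \<mu> ^ Suc M" "\<mu> ^ Suc M \<le> 1"
    using \<mu> power_le_one[OF \<mu>] by (simp_all del: power_Suc)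
  have "phiN p n (Suc M) s \<le> \<mu> ^ Suc M * phiN p n (Suc M) t"
    by (rule phiN_Suc_scaled[OF s(1) st Psi \<mu>M Suc])
  then have "omegaN p n (Suc M) s - 1 \<le> \<mu> * \<mu> ^ Suc M * (omegaN p n (Suc M) t - 1)"
    using phiN_omegaN_bounds[OF s(1) Psi_s] phiN_omegaN_bounds[OF t Psi]
    by (intro omegaN_scaled[OF s t \<mu> \<mu>M]) auto
  then show ?case
    by simp
qed

lemma phiN_scaled:
  assumes s: "0 \<le> s" "s \<le> \<mu> * t" and t: "0 \<le> t" and \<mu>: "0 \<le> \<mu>" "\<mu> \<le> 1" and Psi: "Psi p n t \<le> 2"
  shows "phiN p n M s \<le> \<mu> ^ M * phiN p n M t"
proof (cases M)
  case (Suc M')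
  have "s \<le> t"
    using s t \<mu> mult_left_le_one_le[of t \<mu>] by linarith
  moreover have "0 \<le> \<mu> ^ M" "\<mu> ^ M \<le> 1"
    using \<mu> power_le_one[OF \<mu>] by simp_all
  ultimately show ?thesis
    using phiN_Suc_scaled[OF s(1) _ Psi _ _ omegaN_minus_one_scaled[OF assms, of M']] Suc by simp
qed simp

lemma phiN_less_1:
  assumes t: "0 \<le> t" and Psi: "Psi p n t < 2"
  shows "phiN p n (Suc M) t < 1"
proof -
  let ?W = "omegaN p n M t" and ?w = "omega p n t"
  have W: "1 \<le> ?W" "?W \<le> ?w" "2 * t * ?W < 1"
    using phiN_omegaN_bounds[OF t] Psi by auto
  have "?w - 1 < 1 - 2 * t * ?w"
    using Psi unfolding Psi_def by (simp add: algebra_simps)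
  moreover have "2 * t * ?W \<le> 2 * t * ?w"
    using W t by (simp add: mult_left_mono)
  ultimately show ?thesis
    using W by (simp add: phiN_Suc_eq divide_less_eq_1)
qed

end

section \<open>\<open>p\<close>-norms\<close>

lemma one_le_real_of_ereal: "p \<noteq> \<infinity> \<Longrightarrow> 1 \<le> p \<Longrightarrow> 1 \<le> real_of_ereal p"
  by (cases p) auto

lemma pnorm_infinity: "pnorm \<infinity> n v = Max (insert 0 ((\<lambda>i. \<bar>v i\<bar>) ` {..<n}))"
proof -
  have "{\<bar>v i\<bar> | i. i < n} \<union> {0} = insert 0 ((\<lambda>i. \<bar>v i\<bar>) ` {..<n})"
    by auto
  then show ?thesis
    by (simp add: pnorm_def)
qed

lemma pnorm_finite:
  "p \<noteq> \<infinity> \<Longrightarrow> pnorm p n v = (\<Sum>i<n. \<bar>v i\<bar> powr real_of_ereal p) powr (1 / real_of_ereal p)"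
  by (simp add: pnorm_def)

context
  fixes p :: ereal and n :: nat and v :: "nat \<Rightarrow> real"
  assumes p_ge_1: "1 \<le> p" and nonneg: "\<And>i. i < n \<Longrightarrow> 0 \<le> v i"
begin

lemma pnorm_nonneg: "0 \<le> pnorm p n v"
  by (cases "p = \<infinity>") (simp_all add: pnorm_infinity pnorm_finite Max_ge_iff)

lemma component_le_pnorm:
  assumes i: "i < n"
  shows "v i \<le> pnorm p n v"
proof (cases "p = \<infinity>")
  case True
  then show ?thesis
    using i by (auto simp: pnorm_infinity Max_ge_iff intro!: bexI[of _ i])
next
  case False
  let ?q = "real_of_ereal p"
  have q: "1 \<le> ?q"
    using one_le_real_of_ereal[OF False p_ge_1] .
  have "\<bar>v i\<bar> powr ?q \<le> (\<Sum>j<n. \<bar>v j\<bar> powr ?q)"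
    using i by (intro member_le_sum) auto
  then have "(v i powr ?q) powr (1 / ?q) \<le> (\<Sum>j<n. \<bar>v j\<bar> powr ?q) powr (1 / ?q)"
    using q nonneg[OF i] by (intro powr_mono2) auto
  then show ?thesis
    using False q nonneg[OF i] by (simp add: pnorm_finite powr_powr)
qed

lemma pnorm_le_sum: "pnorm p n v \<le> (\<Sum>i<n. v i)"
proof (cases "p = \<infinity>")
  case True
  have "v i \<le> (\<Sum>i<n. v i)" if "i < n" for i
    using that nonneg by (intro member_le_sum) auto
  moreover have "0 \<le> (\<Sum>i<n. v i)"
    using nonneg by (intro sum_nonneg) auto
  ultimately show ?thesis
    using True nonneg by (auto simp: pnorm_infinity)
next
  case False
  let ?q = "real_of_ereal p" and ?S = "\<Sum>i<n. v i"
  have q: "1 \<le> ?q"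
    using one_le_real_of_ereal[OF False p_ge_1] .
  have S: "0 \<le> ?S"
    using nonneg by (intro sum_nonneg) auto
  have "\<bar>v i\<bar> powr ?q \<le> v i * ?S powr (?q - 1)" if i: "i < n" for i
  proof (cases "v i = 0")
    case False
    then have "0 < v i"
      using nonneg[OF i] by simp
    moreover have "v i \<le> ?S"
      using nonneg i by (intro member_le_sum) auto
    moreover have "\<bar>v i\<bar> powr ?q = v i * v i powr (?q - 1)"
      using \<open>0 < v i\<close> by (simp add: powr_add[symmetric] powr_mult_base)
    ultimately show ?thesis
      using q by (simp add: mult_left_mono powr_mono2)
  qed simp
  then have "(\<Sum>i<n. \<bar>v i\<bar> powr ?q) \<le> (\<Sum>i<n. v i * ?S powr (?q - 1))"
    by (intro sum_mono) auto
  also have "\<dots> = ?S * ?S powr (?q - 1)"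
    by (simp add: sum_distrib_right)
  also have "\<dots> = ?S powr ?q"
    using S q by (cases "?S = 0") (simp_all add: powr_mult_base)
  finally have "(\<Sum>i<n. \<bar>v i\<bar> powr ?q) powr (1 / ?q) \<le> (?S powr ?q) powr (1 / ?q)"
    using q by (intro powr_mono2) (auto simp: sum_nonneg)
  then show ?thesis
    using False S q by (simp add: pnorm_finite powr_powr)
qed

end

lemma pnorm_le_scaled:
  assumes p_ge_1: "1 \<le> p" and nonneg: "\<And>i. i < n \<Longrightarrow> 0 \<le> v i" and c: "0 \<le> c"
    and le: "\<And>i. i < n \<Longrightarrow> v i \<le> c * w i"
  shows "pnorm p n v \<le> c * pnorm p n w"
proof (cases "p = \<infinity>")
  case True
  let ?M = "Max (insert 0 ((\<lambda>i. \<bar>w i\<bar>) ` {..<n}))"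
  have "\<bar>v i\<bar> \<le> c * ?M" if i: "i < n" for i
  proof -
    have "\<bar>v i\<bar> \<le> c * \<bar>w i\<bar>"
      using nonneg[OF i] le[OF i] c by (simp add: abs_mult order_trans[OF _ mult_left_mono])
    also have "\<dots> \<le> c * ?M"
      using i c by (intro mult_left_mono) (auto simp: Max_ge_iff)
    finally show ?thesis .
  qed
  then show ?thesis
    using True c by (auto simp: pnorm_infinity Max_ge_iff)
next
  case False
  let ?q = "real_of_ereal p"
  have q: "1 \<le> ?q"
    using one_le_real_of_ereal[OF False p_ge_1] .
  have "\<bar>v i\<bar> powr ?q \<le> c powr ?q * \<bar>w i\<bar> powr ?q" if i: "i < n" for i
  proof -
    have "\<bar>v i\<bar> powr ?q \<le> \<bar>c * w i\<bar> powr ?q"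
      using nonneg[OF i] le[OF i] q by (intro powr_mono2) auto
    then show ?thesis
      using c by (simp add: abs_mult powr_mult)
  qed
  then have "(\<Sum>i<n. \<bar>v i\<bar> powr ?q) \<le> (\<Sum>i<n. c powr ?q * \<bar>w i\<bar> powr ?q)"
    by (intro sum_mono) auto
  then have "(\<Sum>i<n. \<bar>v i\<bar> powr ?q) \<le> c powr ?q * (\<Sum>i<n. \<bar>w i\<bar> powr ?q)"
    by (simp add: sum_distrib_left)
  then have "(\<Sum>i<n. \<bar>v i\<bar> powr ?q) powr (1/?q) \<le> (c powr ?q * (\<Sum>i<n. \<bar>w i\<bar> powr ?q)) powr (1/?q)"
    using q by (intro powr_mono2) (auto simp: sum_nonneg)
  also have "\<dots> = c * (\<Sum>i<n. \<bar>w i\<bar> powr ?q) powr (1/?q)"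
    using c q by (simp add: powr_mult powr_powr sum_nonneg)
  finally show ?thesis
    using False by (simp add: pnorm_finite)
qed

text \<open>Jensen is applied to the positive terms only, since the library proves convexity of
  \<open>x powr q\<close> on \<open>{0<..}\<close>.\<close>

lemma sum_le_card_powr_mean:
  fixes v :: "'a \<Rightarrow> real"
  assumes S: "finite S" and nonneg: "\<And>j. j \<in> S \<Longrightarrow> 0 \<le> v j" and q: "1 \<le> q"
  shows "(\<Sum>j\<in>S. v j) \<le> real (card S) powr (1 - 1 / q) * (\<Sum>j\<in>S. v j powr q) powr (1 / q)"
proof -
  define S' where "S' = {j\<in>S. 0 < v j}"
  have S': "S' \<subseteq> S" "finite S'"
    using S by (auto simp: S'_def)
  have sum_eq: "(\<Sum>j\<in>S. v j) = (\<Sum>j\<in>S'. v j)"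
  proof (rule sum.mono_neutral_right[OF S S'(1)])
    show "\<forall>j\<in>S - S'. v j = 0"
      using nonneg by (force simp: S'_def)
  qed
  show ?thesis
  proof (cases "S' = {}")
    case True
    then show ?thesis
      using sum_eq by simp
  next
    case False
    let ?k = "real (card S')" and ?A = "\<Sum>j\<in>S'. v j" and ?B = "\<Sum>j\<in>S'. v j powr q"
    have k: "1 \<le> ?k"
      using False S' by (simp add: Suc_le_eq card_gt_0_iff)
    have A: "0 \<le> ?A" and B: "0 \<le> ?B"
      by (auto simp: S'_def intro!: sum_nonneg)
    have "(\<Sum>j\<in>S'. (1 / ?k) * v j) powr q \<le> (\<Sum>j\<in>S'. (1 / ?k) * v j powr q)"
      using convex_on_sum[OF S'(2) False powr_convex[OF q], of "\<lambda>_. 1 / ?k" v] k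
      by (simp add: S'_def)
    then have "(?A / ?k) powr q \<le> ?B / ?k"
      by (simp add: sum_divide_distrib[symmetric])
    then have "((?A / ?k) powr q) powr (1 / q) \<le> (?B / ?k) powr (1 / q)"
      using q by (intro powr_mono2) auto
    then have "?A \<le> ?k * (?B / ?k) powr (1 / q)"
      using q A k by (simp add: powr_powr field_simps)
    also have "\<dots> = ?k powr (1 - 1 / q) * ?B powr (1 / q)"
      using k B by (simp add: powr_divide powr_diff)
    also have "\<dots> \<le> real (card S) powr (1 - 1 / q) * (\<Sum>j\<in>S. v j powr q) powr (1 / q)"
    proof (intro mult_mono powr_mono2)
      show "?k \<le> real (card S)"
        using card_mono[OF S S'(1)] by simp
      show "?B \<le> (\<Sum>j\<in>S. v j powr q)"
        using S S' by (intro sum_mono2) auto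
    qed (use q k B in auto)
    finally show ?thesis
      using sum_eq by simp
  qed
qed

lemma sum_le_pnorm:
  assumes p_ge_1: "1 \<le> p" and n: "n \<ge> 2" and nonneg: "\<And>i. i < n \<Longrightarrow> 0 \<le> v i"
    and S: "S \<subseteq> {..<n}" "card S = n - 1"
  shows "(\<Sum>j\<in>S. v j) \<le> real (n - 1) * pnorm p n v / rootp p n"
proof (cases "p = \<infinity>")
  case True
  have "(\<Sum>j\<in>S. v j) \<le> (\<Sum>j\<in>S. pnorm p n v)"
    using S by (intro sum_mono component_le_pnorm[OF p_ge_1 nonneg]) auto
  then show ?thesis
    using S True by (simp add: rootp_def)
next
  case False
  let ?q = "real_of_ereal p" and ?m = "real (n - 1)"
  have q: "1 \<le> ?q"
    using one_le_real_of_ereal[OF False p_ge_1] .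
  have S_fin: "finite S"
    using S finite_subset by blast
  have "(\<Sum>j\<in>S. v j) \<le> ?m powr (1 - 1 / ?q) * (\<Sum>j\<in>S. v j powr ?q) powr (1 / ?q)"
    using sum_le_card_powr_mean[OF S_fin _ q, of v] nonneg S by auto
  also have "\<dots> \<le> ?m powr (1 - 1 / ?q) * (\<Sum>i<n. \<bar>v i\<bar> powr ?q) powr (1 / ?q)"
  proof -
    have "(\<Sum>j\<in>S. v j powr ?q) \<le> (\<Sum>i<n. v i powr ?q)"
      using S by (intro sum_mono2) auto
    also have "\<dots> = (\<Sum>i<n. \<bar>v i\<bar> powr ?q)"
      using nonneg by (intro sum.cong) auto
    finally have "(\<Sum>j\<in>S. v j powr ?q) \<le> (\<Sum>i<n. \<bar>v i\<bar> powr ?q)" .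
    then show ?thesis
      using q by (intro mult_left_mono powr_mono2) (auto intro!: sum_nonneg)
  qed
  also have "?m powr (1 - 1 / ?q) = ?m / rootp p n"
    using n False by (simp add: rootp_def powr_diff)
  finally show ?thesis
    using False by (simp add: pnorm_finite)
qed

lemma prod_one_plus_le_mean_power:
  assumes S: "finite S" "card S = m" "0 < m" and nonneg: "\<And>j. j \<in> S \<Longrightarrow> 0 \<le> b j"
  shows "(\<Prod>j\<in>S. 1 + b j) \<le> (1 + (\<Sum>j\<in>S. b j) / m) ^ m"
proof -
  let ?P = "\<Prod>j\<in>S. 1 + b j"
  have P: "0 \<le> ?P"
    using nonneg by (intro prod_nonneg) (simp add: add_nonneg_nonneg)
  have "(\<Sum>j\<in>S. (1 + b j) / card S) = 1 + (\<Sum>j\<in>S. b j) / m"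
    using S by (simp add: sum_divide_distrib[symmetric] sum.distrib add_divide_distrib)
  then have "?P powr (1 / m) \<le> 1 + (\<Sum>j\<in>S. b j) / m"
    using arith_geom_mean[OF S(1), of "\<lambda>j. 1 + b j"] S nonneg by force
  then have "(?P powr (1 / m)) ^ m \<le> (1 + (\<Sum>j\<in>S. b j) / m) ^ m"
    by (intro power_mono) auto
  also have "(?P powr (1 / m)) ^ m = ?P"
    using P S by (simp add: powr_realpow'[symmetric] powr_powr)
  finally show ?thesis .
qed

lemma rsquarefree_of_root_vector:
  fixes f :: "'a::field poly"
  assumes root: "root_vector f n \<xi>" and lc: "lead_coeff f \<noteq> 0" and deg: "degree f = n"
    and inj: "inj_on \<xi> {..<n}"
  shows "rsquarefree f"
proof -
  have f: "f \<noteq> 0"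
    using lc by auto
  have roots: "poly f z = 0 \<longleftrightarrow> z \<in> \<xi> ` {..<n}" for z
    using root lc unfolding root_vector_def by (auto simp: prod_zero_iff)
  have "order a f \<le> 1" for a
  proof (rule ccontr)
    assume "\<not> order a f \<le> 1"
    then have "2 \<le> order a f"
      by simp
    then have "[:-a, 1:] ^ 2 dvd f"
      using order_divides by blast
    then obtain q where fq: "f = [:-a, 1:] ^ 2 * q" ..
    have q: "q \<noteq> 0"
      using fq f by auto
    have deg_q: "degree q + 2 = n"
      using fq deg q by (simp add: degree_mult_eq degree_linear_power)
    obtain i where i: "i < n" "\<xi> i = a"
      using roots[of a] fq by auto
    have "\<xi> ` ({..<n} - {i}) \<subseteq> {z. poly q z = 0}"
    proof
      fix z assume "z \<in> \<xi> ` ({..<n} - {i})"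
      then obtain j where j: "j < n" "j \<noteq> i" "z = \<xi> j"
        by auto
      then have "z \<noteq> a"
        using inj i unfolding inj_on_def by auto
      moreover have "poly f z = 0"
        using roots j by auto
      ultimately show "z \<in> {z. poly q z = 0}"
        using fq by simp
    qed
    then have "card (\<xi> ` ({..<n} - {i})) \<le> degree q"
      using card_mono[OF poly_roots_finite[OF q]] card_poly_roots_bound[OF q] order.trans by blast
    moreover have "card (\<xi> ` ({..<n} - {i})) = n - 1"
      using inj i by (subst card_image) (auto intro: inj_on_subset)
    ultimately show False
      using deg_q by simp
  qed
  then show ?thesis
    using f unfolding rsquarefree_def by (metis le_Suc_eq le_zero_eq One_nat_def)
qed

lemma errmax_eq_Max: "errmax av n x \<xi> = Max (insert 0 ((\<lambda>i. av (x i - \<xi> i)) ` {..<n}))"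
  unfolding errmax_def by (rule arg_cong[where f = Max]) auto

lemma errmax_ge: "i < n \<Longrightarrow> av (x i - \<xi> i) \<le> errmax av n x \<xi>"
  unfolding errmax_eq_Max by (auto simp: Max_ge_iff intro!: bexI[of _ i])

lemma errmax_nonneg: "0 \<le> errmax av n x \<xi>"
  unfolding errmax_eq_Max by (auto simp: Max_ge_iff)

lemma errmax_least: "0 \<le> B \<Longrightarrow> (\<And>i. i < n \<Longrightarrow> av (x i - \<xi> i) \<le> B) \<Longrightarrow> errmax av n x \<xi> \<le> B"
  unfolding errmax_eq_Max by auto

section \<open>Weierstrass-type corrections\<close>

definition rel_err :: "('a::field \<Rightarrow> real) \<Rightarrow> nat \<Rightarrow> (nat \<Rightarrow> 'a) \<Rightarrow> (nat \<Rightarrow> 'a) \<Rightarrow> nat \<Rightarrow> real" where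
  "rel_err av n \<xi> x j = av (x j - \<xi> j) / dvec av n x j"

lemma Efun_eq_pnorm_rel_err: "Efun av p n \<xi> x = pnorm p n (rel_err av n \<xi> x)"
  by (simp add: Efun_def rel_err_def[abs_def])

lemma dvec_eq_Min: "dvec av n x i = Min ((\<lambda>j. av (x i - x j)) ` ({..<n} - {i}))"
  unfolding dvec_def by (rule arg_cong[where f = Min]) auto

definition ratio_bounded ::
    "('a::field \<Rightarrow> real) \<Rightarrow> nat \<Rightarrow> (nat \<Rightarrow> 'a) \<Rightarrow> (nat \<Rightarrow> 'a) \<Rightarrow> (nat \<Rightarrow> 'a) \<Rightarrow> real \<Rightarrow> bool" where
  "ratio_bounded av n \<xi> x y \<phi> \<longleftrightarrow> (\<forall>i<n. \<forall>j<n. j \<noteq> i \<longrightarrow>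
     x i \<noteq> y j \<and> av (y j - \<xi> j) \<le> \<phi> * rel_err av n \<xi> x j * av (x i - y j))"

locale weierstrass = abs_value av
  for av :: "'a::field \<Rightarrow> real" +
  fixes f :: "'a poly" and n :: nat and \<xi> :: "nat \<Rightarrow> 'a" and p :: ereal
  assumes n_ge_2: "n \<ge> 2" and p_ge_1: "1 \<le> p"
    and root: "root_vector f n \<xi>" and lead_coeff_nz: "lead_coeff f \<noteq> 0"
begin

abbreviation E :: "(nat \<Rightarrow> 'a) \<Rightarrow> real" where
  "E \<equiv> Efun av p n \<xi>"

lemma other_indices_nonempty: "i < n \<Longrightarrow> {..<n} - {i} \<noteq> {}"
proof -
  assume "i < n"
  then have "(if i = 0 then 1 else 0) \<in> {..<n} - {i}"
    using n_ge_2 by auto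
  then show ?thesis
    by blast
qed

lemma dvec_le: "i < n \<Longrightarrow> j < n \<Longrightarrow> j \<noteq> i \<Longrightarrow> dvec av n x i \<le> av (x i - x j)"
  unfolding dvec_eq_Min by (rule Min_le) auto

lemma dvec_greatest: "i < n \<Longrightarrow> (\<And>j. j < n \<Longrightarrow> j \<noteq> i \<Longrightarrow> c \<le> av (x i - x j)) \<Longrightarrow> c \<le> dvec av n x i"
  unfolding dvec_eq_Min using other_indices_nonempty[of i] by (subst Min_ge_iff) auto

lemma dvec_nonneg: "i < n \<Longrightarrow> 0 \<le> dvec av n x i"
  by (rule dvec_greatest) (auto intro: av_nonneg)

lemma dvec_pos: "inj_on x {..<n} \<Longrightarrow> i < n \<Longrightarrow> 0 < dvec av n x i"
  unfolding dvec_eq_Min using other_indices_nonempty[of i]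
  by (subst Min_gr_iff) (auto simp: inj_on_def intro!: av_pos)

lemma rel_err_nonneg: "i < n \<Longrightarrow> 0 \<le> rel_err av n \<xi> x i"
  unfolding rel_err_def using dvec_nonneg[of i x] av_nonneg by simp

lemma E_nonneg: "0 \<le> E x"
  unfolding Efun_eq_pnorm_rel_err by (rule pnorm_nonneg[OF p_ge_1]) (rule rel_err_nonneg)

lemma rel_err_le_E: "i < n \<Longrightarrow> rel_err av n \<xi> x i \<le> E x"
  unfolding Efun_eq_pnorm_rel_err by (rule component_le_pnorm[OF p_ge_1]) (auto intro: rel_err_nonneg)

lemma av_err_eq_rel_err:
  "inj_on x {..<n} \<Longrightarrow> i < n \<Longrightarrow> av (x i - \<xi> i) = rel_err av n \<xi> x i * dvec av n x i"
  unfolding rel_err_def using dvec_pos[of x i] by simp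

lemma av_err_le_E_dvec:
  "inj_on x {..<n} \<Longrightarrow> i < n \<Longrightarrow> av (x i - \<xi> i) \<le> E x * dvec av n x i"
  using av_err_eq_rel_err[of x i] rel_err_le_E[of i x] dvec_pos[of x i] by (simp add: mult_right_mono)

lemma av_err_le_E_dist:
  assumes x: "inj_on x {..<n}" and ij: "i < n" "j < n" "i \<noteq> j"
  shows "av (x j - \<xi> j) \<le> E x * av (x i - x j)"
proof -
  have "dvec av n x j \<le> av (x i - x j)"
    using dvec_le[of j i x] ij by (simp add: av_minus_commute)
  then show ?thesis
    using av_err_le_E_dvec[OF x ij(2)] E_nonneg[of x] by (meson mult_left_mono order.trans)
qed

lemma av_displacement_le:
  assumes x: "inj_on x {..<n}" and ij: "i < n" "j < n" "i \<noteq> j"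
    and W: "1 \<le> W" and y: "av (y j - \<xi> j) \<le> (W - 1) * av (x j - \<xi> j)"
  shows "av (y j - x j) \<le> W * E x * av (x i - x j)"
proof -
  have "av (y j - x j) \<le> av (y j - \<xi> j) + av (x j - \<xi> j)"
    using av_triangle_diff[of "y j" "x j" "\<xi> j"] av_minus_commute[of "\<xi> j" "x j"] by simp
  also have "\<dots> \<le> W * av (x j - \<xi> j)"
    using y by (simp add: algebra_simps)
  also have "\<dots> \<le> W * (E x * av (x i - x j))"
    using av_err_le_E_dist[OF x ij] W by (intro mult_left_mono) auto
  finally show ?thesis
    by (simp add: mult.assoc)
qed

lemma weierstrass_correction_eq:
  assumes i: "i < n" and y: "\<And>j. j \<in> {..<n} - {i} \<Longrightarrow> x i \<noteq> y j"
  shows "x i - poly f (x i) / (lead_coeff f * (\<Prod>j\<in>{..<n} - {i}. x i - y j)) - \<xi> i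
     = (x i - \<xi> i) * (1 - (\<Prod>j\<in>{..<n} - {i}. (x i - \<xi> j) / (x i - y j)))"
proof -
  have "poly f (x i) = lead_coeff f * ((x i - \<xi> i) * (\<Prod>j\<in>{..<n} - {i}. x i - \<xi> j))"
    using root i unfolding root_vector_def by (simp add: prod.remove[of "{..<n}" i])
  moreover have "(\<Prod>j\<in>{..<n} - {i}. x i - y j) \<noteq> 0"
    using y by simp
  moreover have "(\<Prod>j\<in>{..<n} - {i}. (x i - \<xi> j) / (x i - y j))
      = (\<Prod>j\<in>{..<n} - {i}. x i - \<xi> j) / (\<Prod>j\<in>{..<n} - {i}. x i - y j)"
    by (rule prod_dividef)
  ultimately show ?thesis
    using lead_coeff_nz by (simp add: field_simps)
qed

lemma weierstrass_correction_le:
  assumes i: "i < n" and \<phi>: "0 \<le> \<phi>" and y: "ratio_bounded av n \<xi> x y \<phi>"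
  shows "av (x i - poly f (x i) / (lead_coeff f * (\<Prod>j\<in>{..<n} - {i}. x i - y j)) - \<xi> i)
     \<le> ((1 + E x * \<phi> / rootp p n) ^ (n - 1) - 1) * av (x i - \<xi> i)"
proof -
  let ?S = "{..<n} - {i}" and ?z = "\<lambda>j. (x i - \<xi> j) / (x i - y j)"
  let ?b = "\<lambda>j. \<phi> * rel_err av n \<xi> x j"
  have S: "finite ?S" "card ?S = n - 1" "0 < n - 1"
    using i n_ge_2 by auto
  have b: "0 \<le> ?b j" if "j \<in> ?S" for j
    using that \<phi> rel_err_nonneg by simp
  have z: "av (?z j - 1) \<le> ?b j" if j: "j \<in> ?S" for j
  proof -
    have "x i \<noteq> y j" "av (y j - \<xi> j) \<le> ?b j * av (x i - y j)"
      using y i j unfolding ratio_bounded_def by auto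
    moreover have "?z j - 1 = (y j - \<xi> j) / (x i - y j)"
      using \<open>x i \<noteq> y j\<close> by (simp add: field_simps)
    ultimately show ?thesis
      by (simp add: av_divide divide_le_eq av_pos)
  qed
  have "(\<Sum>j\<in>?S. rel_err av n \<xi> x j) \<le> real (n - 1) * E x / rootp p n"
    unfolding Efun_eq_pnorm_rel_err using S
    by (intro sum_le_pnorm[OF p_ge_1 n_ge_2]) (auto intro: rel_err_nonneg)
  then have "(\<Sum>j\<in>?S. rel_err av n \<xi> x j) / (n - 1) \<le> E x / rootp p n"
    using S by (simp add: pos_divide_le_eq mult.commute)
  then have "\<phi> * ((\<Sum>j\<in>?S. rel_err av n \<xi> x j) / (n - 1)) \<le> \<phi> * (E x / rootp p n)"
    using \<phi> by (rule mult_left_mono)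
  then have "(\<Sum>j\<in>?S. ?b j) / (n - 1) \<le> E x * \<phi> / rootp p n"
    by (simp add: sum_distrib_left[symmetric] mult_ac)
  then have "(1 + (\<Sum>j\<in>?S. ?b j) / (n - 1)) ^ (n - 1) \<le> (1 + E x * \<phi> / rootp p n) ^ (n - 1)"
    using sum_nonneg[of ?S ?b] b by (intro power_mono) auto
  moreover have "av (1 - prod ?z ?S) \<le> (\<Prod>j\<in>?S. 1 + ?b j) - 1"
    using S(1) z by (rule av_one_minus_prod_le)
  moreover have "(\<Prod>j\<in>?S. 1 + ?b j) \<le> (1 + (\<Sum>j\<in>?S. ?b j) / (n - 1)) ^ (n - 1)"
    using S b by (rule prod_one_plus_le_mean_power)
  ultimately have "av (1 - prod ?z ?S) \<le> (1 + E x * \<phi> / rootp p n) ^ (n - 1) - 1"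
    by linarith
  moreover have "x i - poly f (x i) / (lead_coeff f * (\<Prod>j\<in>?S. x i - y j)) - \<xi> i
      = (x i - \<xi> i) * (1 - prod ?z ?S)"
    using y i by (intro weierstrass_correction_eq) (auto simp: ratio_bounded_def)
  ultimately show ?thesis
    using av_nonneg[of "x i - \<xi> i"] by (simp add: av_mult mult.commute mult_left_mono)
qed

lemma ratio_bounded_of_err_le:
  assumes x: "inj_on x {..<n}" and W: "1 \<le> W" "2 * E x * W < 1"
    and y: "\<And>j. j < n \<Longrightarrow> av (y j - \<xi> j) \<le> (W - 1) * av (x j - \<xi> j)"
  shows "ratio_bounded av n \<xi> x y ((W - 1) / (1 - 2 * E x * W))"
  unfolding ratio_bounded_def
proof (intro allI impI)
  fix i j assume ij: "i < n" "j < n" "j \<noteq> i"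
  let ?q = "av (x i - x j)" and ?\<psi> = "1 - 2 * E x * W" and ?r = "rel_err av n \<xi> x j"
  have q: "0 < ?q"
    using x ij by (auto simp: inj_on_def intro!: av_pos)
  have \<psi>: "0 < ?\<psi>"
    using W by simp
  have "0 \<le> W * E x * ?q"
    using W q E_nonneg[of x] by simp
  then have "?q * ?\<psi> \<le> ?q - W * E x * ?q"
    by (simp add: algebra_simps)
  also have "\<dots> \<le> ?q - av (y j - x j)"
    using av_displacement_le[where y = y, OF x ij(1,2) ij(3)[symmetric] W(1) y[OF ij(2)]] by simp
  also have "\<dots> \<le> av (x i - y j)"
    using av_reverse_triangle[of "x i - x j" "y j - x j"] by simp
  finally have sep: "?q * ?\<psi> \<le> av (x i - y j)" .
  have "av (y j - \<xi> j) \<le> (W - 1) * (?r * dvec av n x j)"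
    using y[OF ij(2)] av_err_eq_rel_err[OF x ij(2)] by simp
  also have "\<dots> \<le> (W - 1) * (?r * ?q)"
    using dvec_le[OF ij(2,1)] ij(3) W rel_err_nonneg[OF ij(2)]
    by (simp add: av_minus_commute mult_left_mono)
  also have "\<dots> = (W - 1) / ?\<psi> * ?r * (?q * ?\<psi>)"
    using \<psi> by simp
  also have "\<dots> \<le> (W - 1) / ?\<psi> * ?r * av (x i - y j)"
    using sep W \<psi> rel_err_nonneg[OF ij(2)] by (intro mult_left_mono) auto
  moreover have "x i \<noteq> y j"
    using sep mult_pos_pos[OF q \<psi>] by auto
  ultimately show "x i \<noteq> y j \<and> av (y j - \<xi> j) \<le> (W - 1) / ?\<psi> * ?r * av (x i - y j)"
    by simp
qed

lemma TW_Suc_err_le: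
  assumes "ratio_bounded av n \<xi> x (TW f n M x) (phiN p n M (E x))" "0 \<le> phiN p n M (E x)" "i < n"
  shows "av (TW f n (Suc M) x i - \<xi> i) \<le> (omegaN p n M (E x) - 1) * av (x i - \<xi> i)"
  using weierstrass_correction_le[OF assms(3,2,1)] by (simp add: omegaN_def mult_ac)

lemma TW_ratio_bounded:
  assumes x: "inj_on x {..<n}" and Psi: "Psi p n (E x) \<le> 2"
  shows "x \<in> DW f n M \<and> ratio_bounded av n \<xi> x (TW f n M x) (phiN p n M (E x))"
proof (induction M)
  case 0
  have "av (x j - \<xi> j) \<le> rel_err av n \<xi> x j * av (x i - x j)" if ij: "i < n" "j < n" "j \<noteq> i" for i j
    using av_err_eq_rel_err[OF x ij(2)] dvec_le[OF ij(2,1)] ij(3) rel_err_nonneg[OF ij(2)]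
    by (simp add: av_minus_commute mult_left_mono)
  then show ?case
    using x by (auto simp: ratio_bounded_def inj_on_def)
next
  case (Suc M)
  let ?t = "E x"
  let ?W = "omegaN p n M ?t"
  have bounds: "0 \<le> phiN p n M ?t" "1 \<le> ?W" "2 * ?t * ?W < 1"
    using phiN_omegaN_bounds[OF n_ge_2 E_nonneg Psi] by auto
  have "ratio_bounded av n \<xi> x (TW f n (Suc M) x) ((?W - 1) / (1 - 2 * ?t * ?W))"
    using Suc bounds by (intro ratio_bounded_of_err_le[OF x] TW_Suc_err_le) auto
  moreover have "x \<in> DW f n (Suc M)"
    using Suc unfolding ratio_bounded_def by auto
  ultimately show ?case
    by (simp add: phiN_Suc_eq)
qed

lemma TW_Suc_err_le_omegaN:
  assumes x: "inj_on x {..<n}" and Psi: "Psi p n (E x) \<le> 2" and i: "i < n"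
  shows "av (TW f n (Suc M) x i - \<xi> i) \<le> (omegaN p n M (E x) - 1) * av (x i - \<xi> i)"
  using TW_ratio_bounded[OF x Psi] phiN_omegaN_bounds[OF n_ge_2 E_nonneg Psi] i
  by (intro TW_Suc_err_le) auto

lemma DW_of_inj_on:
  assumes "inj_on x {..<n}" "Psi p n (E x) \<le> 2"
  shows "x \<in> DW f n M"
  using TW_ratio_bounded[OF assms] by blast

lemma TW_Suc_separation:
  assumes x: "inj_on x {..<n}" and Psi: "Psi p n (E x) \<le> 2" and ij: "i < n" "j < n" "i \<noteq> j"
  shows "(1 - 2 * E x * omegaN p n M (E x)) * av (x i - x j)
    \<le> av (TW f n (Suc M) x i - TW f n (Suc M) x j)"
proof -
  let ?x' = "TW f n (Suc M) x" and ?W = "omegaN p n M (E x)"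
  have W: "1 \<le> ?W"
    using phiN_omegaN_bounds[OF n_ge_2 E_nonneg Psi] by auto
  have "av (?x' i - x i) \<le> ?W * E x * av (x j - x i)"
    using av_displacement_le[where y = ?x', OF x ij(2,1) ij(3)[symmetric] W TW_Suc_err_le_omegaN[OF x Psi ij(1)]] .
  moreover have "av (?x' j - x j) \<le> ?W * E x * av (x i - x j)"
    using av_displacement_le[where y = ?x', OF x ij W TW_Suc_err_le_omegaN[OF x Psi ij(2)]] .
  moreover have "av (x i - x j) \<le> av (?x' i - x i) + av (?x' i - ?x' j) + av (?x' j - x j)"
    using av_triangle_diff[of "x i" "x j" "?x' i"] av_triangle_diff[of "?x' i" "x j" "?x' j"]
      av_minus_commute[of "x i" "?x' i"] by simp
  ultimately show ?thesis
    by (simp add: av_minus_commute[of "x j"] algebra_simps)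
qed

lemma inj_on_TW_Suc:
  assumes x: "inj_on x {..<n}" and Psi: "Psi p n (E x) \<le> 2"
  shows "inj_on (TW f n (Suc M) x) {..<n}"
proof (rule inj_onI, rule ccontr)
  fix i j assume ij: "i \<in> {..<n}" "j \<in> {..<n}" "TW f n (Suc M) x i = TW f n (Suc M) x j" "i \<noteq> j"
  have "0 < 1 - 2 * E x * omegaN p n M (E x)"
    using phiN_omegaN_bounds[OF n_ge_2 E_nonneg Psi] by auto
  moreover have "0 < av (x i - x j)"
    using x ij by (auto simp: inj_on_def intro!: av_pos)
  ultimately show False
    using TW_Suc_separation[OF x Psi, of i j M] ij by (simp add: mult_le_0_iff)
qed

lemma dvec_TW_Suc_ge:
  assumes x: "inj_on x {..<n}" and Psi: "Psi p n (E x) \<le> 2" and i: "i < n"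
  shows "(1 - 2 * E x * omegaN p n M (E x)) * dvec av n x i \<le> dvec av n (TW f n (Suc M) x) i"
proof (rule dvec_greatest[OF i])
  fix j assume j: "j < n" "j \<noteq> i"
  have "0 \<le> 1 - 2 * E x * omegaN p n M (E x)"
    using phiN_omegaN_bounds[OF n_ge_2 E_nonneg Psi, of M] by auto
  then have "(1 - 2 * E x * omegaN p n M (E x)) * dvec av n x i
      \<le> (1 - 2 * E x * omegaN p n M (E x)) * av (x i - x j)"
    using dvec_le[OF i j] by (rule mult_left_mono[rotated])
  also have "\<dots> \<le> av (TW f n (Suc M) x i - TW f n (Suc M) x j)"
    using TW_Suc_separation[OF x Psi i j(1)] j by simp
  finally show "(1 - 2 * E x * omegaN p n M (E x)) * dvec av n x i
      \<le> av (TW f n (Suc M) x i - TW f n (Suc M) x j)" .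
qed

lemma E_TW_Suc_le:
  assumes x: "inj_on x {..<n}" and Psi: "Psi p n (E x) \<le> 2"
  shows "E (TW f n (Suc M) x) \<le> phiN p n (Suc M) (E x) * E x"
proof -
  let ?x' = "TW f n (Suc M) x" and ?W = "omegaN p n M (E x)"
  have W: "1 \<le> ?W" "2 * E x * ?W < 1"
    using phiN_omegaN_bounds[OF n_ge_2 E_nonneg Psi, of M] by auto
  have "rel_err av n \<xi> ?x' i \<le> phiN p n (Suc M) (E x) * rel_err av n \<xi> x i" if i: "i < n" for i
  proof -
    have "rel_err av n \<xi> ?x' i \<le> ((?W - 1) * av (x i - \<xi> i)) / ((1 - 2 * E x * ?W) * dvec av n x i)"
      unfolding rel_err_def
      using TW_Suc_err_le_omegaN[OF x Psi i, of M] dvec_TW_Suc_ge[OF x Psi i, of M] dvec_pos[OF x i] W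
        av_nonneg[of "?x' i - \<xi> i"] av_nonneg[of "x i - \<xi> i"]
      by (intro frac_le) auto
    also have "\<dots> = phiN p n (Suc M) (E x) * rel_err av n \<xi> x i"
      by (simp add: phiN_Suc_eq rel_err_def)
    finally show ?thesis .
  qed
  moreover have "0 \<le> phiN p n (Suc M) (E x)"
    using W by (simp add: phiN_Suc_eq)
  ultimately show ?thesis
    unfolding Efun_eq_pnorm_rel_err by (intro pnorm_le_scaled[OF p_ge_1 rel_err_nonneg]) auto
qed

lemma inj_on_roots:
  assumes x: "inj_on x {..<n}" and E: "2 * E x < 1"
  shows "inj_on \<xi> {..<n}"
proof (rule inj_onI, rule ccontr)
  fix i j assume ij: "i \<in> {..<n}" "j \<in> {..<n}" "\<xi> i = \<xi> j" "i \<noteq> j"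
  let ?q = "av (x i - x j)"
  have "?q \<le> av (x i - \<xi> i) + av (x j - \<xi> j)"
    using av_triangle_diff[of "x i" "x j" "\<xi> i"] av_minus_commute[of "\<xi> j" "x j"] ij(3) by simp
  also have "\<dots> \<le> E x * ?q + E x * ?q"
    using av_err_le_E_dist[OF x, of j i] av_err_le_E_dist[OF x, of i j] ij
    by (simp add: av_minus_commute[of "x j"])
  finally have "?q * (1 - 2 * E x) \<le> 0"
    by (simp add: algebra_simps)
  moreover have "0 < ?q"
    using x ij by (auto simp: inj_on_def intro!: av_pos)
  ultimately show False
    using E by (simp add: mult_le_0_iff)
qed

lemma E_le_errmax:
  assumes \<Delta>: "0 < \<Delta>" "\<And>i. i < n \<Longrightarrow> \<Delta> \<le> dvec av n x i"
  shows "E x \<le> n * errmax av n x \<xi> / \<Delta>"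
proof -
  have "E x \<le> (\<Sum>i<n. rel_err av n \<xi> x i)"
    unfolding Efun_eq_pnorm_rel_err by (rule pnorm_le_sum[OF p_ge_1 rel_err_nonneg])
  also have "\<dots> \<le> (\<Sum>i<n. errmax av n x \<xi> / \<Delta>)"
    unfolding rel_err_def using \<Delta> errmax_ge errmax_nonneg av_nonneg
    by (intro sum_mono frac_le) auto
  finally show ?thesis
    by simp
qed

end

section \<open>The iteration\<close>

locale weierstrass_iteration = weierstrass +
  fixes N :: nat and x0 :: "nat \<Rightarrow> 'a"
  assumes N_pos: "0 < N" and x0_inj: "inj_on x0 {..<n}" and x0_Psi: "Psi p n (E x0) \<le> 2"
begin

abbreviation xs :: "nat \<Rightarrow> nat \<Rightarrow> 'a" where
  "xs k \<equiv> (TW f n N ^^ k) x0"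

abbreviation lam :: real where
  "lam \<equiv> phiN p n N (E x0)"

abbreviation \<theta> :: real where
  "\<theta> \<equiv> psiN p n N (E x0)"

abbreviation W\<^sub>0 :: real where
  "W\<^sub>0 \<equiv> omegaN p n (N - 1) (E x0)"

abbreviation expo :: "nat \<Rightarrow> nat" where
  "expo k \<equiv> \<Sum>m<k. (N + 1) ^ m"

lemma N_eq_Suc: "N = Suc (N - 1)"
  using N_pos by simp

lemma x0_bounds: "0 \<le> lam" "lam \<le> 1" "1 \<le> W\<^sub>0" "2 * E x0 * W\<^sub>0 < 1"
  using phiN_omegaN_bounds[OF n_ge_2 E_nonneg x0_Psi] by auto

lemma \<theta>_eq: "\<theta> = 1 - 2 * E x0 * W\<^sub>0"
  by (simp add: psiN_def)

lemma \<theta>_bounds: "0 < \<theta>" "\<theta> \<le> 1"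
  using x0_bounds E_nonneg[of x0] unfolding \<theta>_eq by auto

lemma W\<^sub>0_minus_one: "W\<^sub>0 - 1 = lam * \<theta>"
  using \<theta>_bounds phiN_Suc_eq[of p n "N - 1" "E x0", folded N_eq_Suc] unfolding \<theta>_eq by simp

lemma iterate_inj_and_E_le: "inj_on (xs k) {..<n} \<and> E (xs k) \<le> lam ^ expo k * E x0"
proof (induction k)
  case (Suc k)
  let ?\<mu> = "lam ^ expo k" and ?t = "E (xs k)"
  have \<mu>: "0 \<le> ?\<mu>" "?\<mu> \<le> 1"
    using x0_bounds by (auto simp: power_le_one)
  have x: "inj_on (xs k) {..<n}" and t: "?t \<le> ?\<mu> * E x0"
    using Suc by auto
  have "?\<mu> * E x0 \<le> E x0"
    using \<mu> E_nonneg[of x0] by (simp add: mult_left_le_one_le)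
  then have Psi: "Psi p n ?t \<le> 2"
    using Psi_mono[OF n_ge_2 E_nonneg, of "xs k" "E x0" p] t x0_Psi by linarith
  have "E (xs (Suc k)) \<le> phiN p n N ?t * ?t"
    using E_TW_Suc_le[OF x Psi, of "N - 1", folded N_eq_Suc] by simp
  also have "\<dots> \<le> (?\<mu> ^ N * lam) * (?\<mu> * E x0)"
    using phiN_scaled[OF n_ge_2 E_nonneg t E_nonneg \<mu> x0_Psi, of N] t E_nonneg[of "xs k"]
      phiN_omegaN_bounds[OF n_ge_2 E_nonneg Psi, of N]
    by (intro mult_mono) auto
  also have "\<dots> = lam ^ (N * expo k + 1 + expo k) * E x0"
    by (simp add: power_add power_mult[symmetric] mult_ac)
  also have "N * expo k + 1 + expo k = expo (Suc k)"
    using geometric_exponent[of N k] by simp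
  finally show ?case
    using inj_on_TW_Suc[OF x Psi, of "N - 1", folded N_eq_Suc] by simp
qed (simp add: x0_inj)

lemma iterate_inj: "inj_on (xs k) {..<n}"
  using iterate_inj_and_E_le by blast

lemma E_iterate_le: "E (xs k) \<le> lam ^ expo k * E x0"
  using iterate_inj_and_E_le by blast

lemma E_iterate_le_E_x0: "E (xs k) \<le> E x0"
  using E_iterate_le[of k] x0_bounds E_nonneg[of x0]
  by (meson mult_left_le_one_le order.trans power_le_one zero_le_power)

lemma Psi_iterate: "Psi p n (E (xs k)) \<le> 2"
  using Psi_mono[OF n_ge_2 E_nonneg E_iterate_le_E_x0[of k], of p] x0_Psi by linarith

lemma iterate_in_DW: "xs k \<in> DW f n N"
  by (rule DW_of_inj_on[OF iterate_inj Psi_iterate])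

lemma omegaN_iterate_le:
  assumes "0 \<le> \<mu>" "\<mu> \<le> 1" "E (xs k) \<le> \<mu> * E x0"
  shows "omegaN p n (N - 1) (E (xs k)) - 1 \<le> \<mu> ^ N * (W\<^sub>0 - 1)"
  using omegaN_minus_one_scaled[OF n_ge_2 E_nonneg assms(3) E_nonneg assms(1,2) x0_Psi, of "N - 1",
      folded N_eq_Suc] .

lemma err_iterate_Suc_le:
  "i < n \<Longrightarrow> av (xs (Suc k) i - \<xi> i) \<le> (omegaN p n (N - 1) (E (xs k)) - 1) * av (xs k i - \<xi> i)"
  using TW_Suc_err_le_omegaN[OF iterate_inj Psi_iterate, of i "N - 1" k, folded N_eq_Suc] by simp

lemma err_iterate_Suc_le_rate:
  assumes i: "i < n"
  shows "av (xs (Suc k) i - \<xi> i) \<le> \<theta> * lam ^ ((N + 1) ^ k) * av (xs k i - \<xi> i)"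
proof -
  have "omegaN p n (N - 1) (E (xs k)) - 1 \<le> (lam ^ expo k) ^ N * (lam * \<theta>)"
    using omegaN_iterate_le[OF _ _ E_iterate_le] x0_bounds W\<^sub>0_minus_one by (simp add: power_le_one)
  also have "\<dots> = \<theta> * lam ^ (N * expo k + 1)"
    by (simp add: power_mult[symmetric] mult_ac)
  also have "N * expo k + 1 = (N + 1) ^ k"
    by (rule geometric_exponent)
  finally show ?thesis
    using err_iterate_Suc_le[OF i, of k] av_nonneg[of "xs k i - \<xi> i"]
    by (meson mult_right_mono order.trans)
qed

lemma err_iterate_le:
  assumes i: "i < n"
  shows "av (xs k i - \<xi> i) \<le> \<theta> ^ k * lam ^ expo k * av (x0 i - \<xi> i)"
proof (induction k)
  case (Suc k)
  have "av (xs (Suc k) i - \<xi> i) \<le> \<theta> * lam ^ ((N + 1) ^ k) * av (xs k i - \<xi> i)"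
    by (rule err_iterate_Suc_le_rate[OF i])
  also have "\<dots> \<le> \<theta> * lam ^ ((N + 1) ^ k) * (\<theta> ^ k * lam ^ expo k * av (x0 i - \<xi> i))"
    using Suc \<theta>_bounds x0_bounds by (intro mult_left_mono) auto
  also have "\<dots> = \<theta> ^ Suc k * lam ^ expo (Suc k) * av (x0 i - \<xi> i)"
    by (simp add: power_add mult_ac)
  finally show ?case .
qed simp

lemma E_x0_pos:
  assumes i: "i < n" and "x0 i \<noteq> \<xi> i"
  shows "0 < E x0"
proof -
  have "0 < E x0 * dvec av n x0 i"
    using av_err_le_E_dvec[OF x0_inj i] av_pos[of "x0 i - \<xi> i"] assms by simp
  then show ?thesis
    using dvec_pos[OF x0_inj i] by (simp add: zero_less_mult_iff)
qed

lemma iterate_converges: "conv_av av n xs \<xi>"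
  unfolding conv_av_def
proof (intro allI impI)
  fix i :: nat and e :: real assume i: "i < n" and e: "0 < e"
  let ?e0 = "av (x0 i - \<xi> i)"
  have bound: "av (xs k i - \<xi> i) \<le> \<theta> ^ k * ?e0" for k
  proof -
    have "lam ^ expo k * ?e0 \<le> ?e0"
      using x0_bounds av_nonneg[of "x0 i - \<xi> i"] by (intro mult_left_le_one_le) (auto simp: power_le_one)
    then have "\<theta> ^ k * lam ^ expo k * ?e0 \<le> \<theta> ^ k * ?e0"
      using \<theta>_bounds by (simp add: mult.assoc mult_left_mono)
    then show ?thesis
      using err_iterate_le[OF i, of k] by linarith
  qed
  show "\<exists>K. \<forall>k\<ge>K. av (xs k i - \<xi> i) < e"
  proof (cases "x0 i = \<xi> i")
    case True
    then have "av (xs k i - \<xi> i) < e" for k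
      using bound[of k] e by simp
    then show ?thesis
      by blast
  next
    case False
    then have e0: "0 < ?e0"
      by (simp add: av_pos)
    have "\<theta> < 1"
      using E_x0_pos[OF i False] x0_bounds unfolding \<theta>_eq by simp
    then have "(\<lambda>k. \<theta> ^ k * ?e0) \<longlonglongrightarrow> 0 * ?e0"
      using \<theta>_bounds by (intro tendsto_mult LIMSEQ_power_zero) auto
    then have "eventually (\<lambda>k. \<theta> ^ k * ?e0 < e) sequentially"
      using e by (intro order_tendstoD(2)) auto
    then obtain K where "\<forall>k\<ge>K. \<theta> ^ k * ?e0 < e"
      by (auto simp: eventually_sequentially)
    then show ?thesis
      using bound order.strict_trans1 by blast
  qed
qed

lemma le_expo: "k \<le> expo k"
proof (induction k)
  case (Suc k)
  have "1 \<le> (N + 1) ^ k"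
    by simp
  then have "Suc k \<le> expo k + (N + 1) ^ k"
    using Suc by linarith
  then show ?case
    by simp
qed simp

text \<open>The estimate \<open>1 - c\<lambda>\<^sup>k \<ge> (1 - c) powr \<lambda>\<^sup>k\<close> turns the product of the
  per-step shrinking factors into a power of \<open>1 - c\<close> with a geometric-series exponent.\<close>

lemma dvec_iterate_ge:
  assumes i: "i < n"
  shows "(1 - 2 * E x0 * W\<^sub>0) powr (\<Sum>m<k. lam ^ m) * dvec av n x0 i \<le> dvec av n (xs k) i"
proof (induction k)
  case (Suc k)
  let ?c = "2 * E x0 * W\<^sub>0" and ?t = "E (xs k)"
  have c: "0 \<le> ?c" "?c < 1"
    using x0_bounds E_nonneg[of x0] by auto
  have lam_k: "0 \<le> lam ^ k" "lam ^ k \<le> 1"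
    using x0_bounds by (auto simp: power_le_one)
  have t: "?t \<le> lam ^ k * E x0"
    using E_iterate_le[of k] power_decreasing[OF le_expo, of lam] x0_bounds E_nonneg[of x0]
    by (meson mult_right_mono order.trans)
  have "omegaN p n (N - 1) ?t \<le> W\<^sub>0"
    using omegaN_iterate_le[of 1 k] E_iterate_le_E_x0[of k] by simp
  then have "2 * ?t * omegaN p n (N - 1) ?t \<le> 2 * (lam ^ k * E x0) * W\<^sub>0"
    using t E_nonneg[of "xs k"] phiN_omegaN_bounds[OF n_ge_2 E_nonneg Psi_iterate, of "N - 1" k]
      E_nonneg[of x0] lam_k by (intro mult_mono) auto
  then have "2 * ?t * omegaN p n (N - 1) ?t \<le> ?c * lam ^ k"
    by (simp add: mult_ac)
  then have "(1 - ?c) powr (lam ^ k) \<le> 1 - 2 * ?t * omegaN p n (N - 1) ?t"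
    using powr_le_one_minus_mult[OF c lam_k] by linarith
  then have "(1 - ?c) powr (lam ^ k) * ((1 - ?c) powr (\<Sum>m<k. lam ^ m) * dvec av n x0 i)
      \<le> (1 - 2 * ?t * omegaN p n (N - 1) ?t) * dvec av n (xs k) i"
    using Suc mult_nonneg_nonneg[OF powr_ge_zero dvec_nonneg[OF i]]
      phiN_omegaN_bounds[OF n_ge_2 E_nonneg Psi_iterate, of "N - 1" k]
    by (intro mult_mono) auto
  also have "\<dots> \<le> dvec av n (xs (Suc k)) i"
    using dvec_TW_Suc_ge[OF iterate_inj Psi_iterate i, of k "N - 1", folded N_eq_Suc] by simp
  finally show ?case
    by (simp add: powr_add mult_ac)
qed (simp add: dvec_nonneg[OF i])

lemma dvec_iterate_lower_bound:
  assumes Psi: "Psi p n (E x0) < 2"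
  obtains \<Delta> where "0 < \<Delta>" "\<And>k i. i < n \<Longrightarrow> \<Delta> \<le> dvec av n (xs k) i"
proof
  let ?c = "2 * E x0 * W\<^sub>0"
  have c: "0 < 1 - ?c"
    using x0_bounds by simp
  have lam: "lam < 1"
    using phiN_less_1[OF n_ge_2 E_nonneg Psi, of "N - 1", folded N_eq_Suc] .
  define D where "D = Min (dvec av n x0 ` {..<n})"
  have D: "0 < D" "\<And>i. i < n \<Longrightarrow> D \<le> dvec av n x0 i"
    unfolding D_def using n_ge_2 dvec_pos[OF x0_inj] by (subst Min_gr_iff) (auto simp: lessThan_empty_iff)
  show "0 < (1 - ?c) powr (1 / (1 - lam)) * D"
    using c D by simp
  fix k i assume i: "i < n"
  have "(\<Sum>m<k. lam ^ m) \<le> 1 / (1 - lam)"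
    using lam x0_bounds by (simp add: sum_gp_strict divide_right_mono)
  then have "(1 - ?c) powr (1 / (1 - lam)) \<le> (1 - ?c) powr (\<Sum>m<k. lam ^ m)"
    using c x0_bounds E_nonneg[of x0] by (intro powr_mono') auto
  then have "(1 - ?c) powr (1 / (1 - lam)) * D \<le> (1 - ?c) powr (\<Sum>m<k. lam ^ m) * dvec av n x0 i"
    using D(1) D(2)[OF i] by (intro mult_mono) simp_all
  then show "(1 - ?c) powr (1 / (1 - lam)) * D \<le> dvec av n (xs k) i"
    using dvec_iterate_ge[OF i, of k] by linarith
qed

lemma iterate_order:
  assumes Psi: "Psi p n (E x0) < 2"
  shows "\<exists>C\<ge>0. \<forall>k. errmax av n (xs (Suc k)) \<xi> \<le> C * errmax av n (xs k) \<xi> ^ (N + 1)"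
proof (cases "E x0 = 0")
  case True
  then have "x0 i = \<xi> i" if "i < n" for i
    using E_x0_pos that by force
  then have "errmax av n (xs (Suc k)) \<xi> \<le> 0" for k
    using err_iterate_le[of _ "Suc k"] by (intro errmax_least) auto
  then show ?thesis
    by (intro exI[of _ 0]) simp
next
  case False
  then have E0: "0 < E x0"
    using E_nonneg[of x0] by simp
  obtain \<Delta> where \<Delta>: "0 < \<Delta>" "\<And>k i. i < n \<Longrightarrow> \<Delta> \<le> dvec av n (xs k) i"
    using dvec_iterate_lower_bound[OF Psi] by blast
  define C where "C = (W\<^sub>0 - 1) * (n / (\<Delta> * E x0)) ^ N"
  have C: "0 \<le> C"
    using \<Delta> E0 x0_bounds by (simp add: C_def)
  have "errmax av n (xs (Suc k)) \<xi> \<le> C * errmax av n (xs k) \<xi> ^ (N + 1)" for k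
  proof (rule errmax_least)
    let ?e = "errmax av n (xs k) \<xi>" and ?\<mu> = "E (xs k) / E x0"
    show "0 \<le> C * ?e ^ (N + 1)"
      using C errmax_nonneg by (intro mult_nonneg_nonneg zero_le_power)
    fix i assume i: "i < n"
    have \<mu>: "0 \<le> ?\<mu>" "?\<mu> \<le> 1" "E (xs k) \<le> ?\<mu> * E x0"
      using E_nonneg[of "xs k"] E_iterate_le_E_x0[of k] E0 by auto
    have "E (xs k) \<le> n * ?e / \<Delta>"
      using \<Delta> by (rule E_le_errmax)
    then have "?\<mu> \<le> n * ?e / \<Delta> / E x0"
      using E0 by (intro divide_right_mono) auto
    then have "?\<mu> \<le> n * ?e / (\<Delta> * E x0)"
      by simp
    then have "?\<mu> ^ N * (W\<^sub>0 - 1) \<le> (n * ?e / (\<Delta> * E x0)) ^ N * (W\<^sub>0 - 1)"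
      using \<mu> x0_bounds by (intro mult_right_mono power_mono) auto
    then have "omegaN p n (N - 1) (E (xs k)) - 1 \<le> (n * ?e / (\<Delta> * E x0)) ^ N * (W\<^sub>0 - 1)"
      using omegaN_iterate_le[OF \<mu>] by linarith
    then have "(omegaN p n (N - 1) (E (xs k)) - 1) * av (xs k i - \<xi> i)
        \<le> (n * ?e / (\<Delta> * E x0)) ^ N * (W\<^sub>0 - 1) * ?e"
      using errmax_ge[OF i, of av "xs k" \<xi>] av_nonneg
        phiN_omegaN_bounds[OF n_ge_2 E_nonneg Psi_iterate, of "N - 1" k]
      by (intro mult_mono) auto
    then have "av (xs (Suc k) i - \<xi> i) \<le> (n * ?e / (\<Delta> * E x0)) ^ N * (W\<^sub>0 - 1) * ?e"
      using err_iterate_Suc_le[OF i, of k] by linarith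
    also have "(n * ?e / (\<Delta> * E x0)) ^ N * (W\<^sub>0 - 1) * ?e = C * ?e ^ (N + 1)"
      unfolding C_def times_divide_eq_left[symmetric] power_mult_distrib by simp
    finally show "av (xs (Suc k) i - \<xi> i) \<le> C * ?e ^ (N + 1)" .
  qed
  then show ?thesis
    using C by blast
qed

lemma inj_on_root_vector: "inj_on \<xi> {..<n}"
proof (rule inj_on_roots[OF x0_inj])
  have "2 * E x0 * 1 \<le> 2 * E x0 * W\<^sub>0"
    using x0_bounds E_nonneg[of x0] by (intro mult_left_mono) auto
  then show "2 * E x0 < 1"
    using x0_bounds by simp
qed

lemma expo_eq_div: "expo k = ((N + 1) ^ k - 1) div N"
proof -
  have "(N + 1) ^ k - 1 = N * expo k"
    using geometric_exponent[of N k] by linarith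
  then show ?thesis
    using N_pos by simp
qed

end

theorem theorem2p11:
  fixes av :: "'a::alg_closed_field \<Rightarrow> real"
    and f :: "'a poly" and n N :: nat and p :: ereal
    and \<xi> x0 :: "nat \<Rightarrow> 'a"
  assumes av: "is_abs_value av"
    and deg: "degree f = n" and n2: "n \<ge> 2"
    and root: "root_vector f n \<xi>"
    and N1: "N \<ge> 1"
    and p1: "1 \<le> p"
    and dist: "\<forall>i<n. \<forall>j<n. i \<noteq> j \<longrightarrow> x0 i \<noteq> x0 j"
    and init: "Psi p n (Efun av p n \<xi> x0) \<le> 2"
  shows "rsquarefree f
    \<and> (\<forall>k. (TW f n N ^^ k) x0 \<in> DW f n N)
    \<and> conv_av av n (\<lambda>k. (TW f n N ^^ k) x0) \<xi>
    \<and> (\<forall>k. \<forall>i<n.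
          av ((TW f n N ^^ Suc k) x0 i - \<xi> i)
            \<le> psiN p n N (Efun av p n \<xi> x0) * phiN p n N (Efun av p n \<xi> x0) ^ ((N + 1) ^ k)
              * av ((TW f n N ^^ k) x0 i - \<xi> i))
    \<and> (\<forall>k. \<forall>i<n.
          av ((TW f n N ^^ k) x0 i - \<xi> i)
            \<le> psiN p n N (Efun av p n \<xi> x0) ^ k
              * phiN p n N (Efun av p n \<xi> x0) ^ (((N + 1) ^ k - 1) div N)
              * av (x0 i - \<xi> i))
    \<and> (Psi p n (Efun av p n \<xi> x0) < 2 \<longrightarrow>
          conv_order av n (\<lambda>k. (TW f n N ^^ k) x0) \<xi> (N + 1))"
proof -
  have lead_coeff: "lead_coeff f \<noteq> 0"
    using deg n2 by auto
  interpret weierstrass_iteration av f n \<xi> p N x0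
    using av n2 p1 root lead_coeff N1 init dist by unfold_locales (auto simp: inj_on_def)
  show ?thesis
    using rsquarefree_of_root_vector[OF root lead_coeff deg inj_on_root_vector]
      iterate_in_DW iterate_converges err_iterate_Suc_le_rate err_iterate_le iterate_order
    unfolding conv_order_def expo_eq_div by blast
qed

end
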